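(* Let $m,n,k$ be positive integers, let $X_1,\ldots,X_k$ be pairwise disjoint $2$-element subsets of $[m]$, and let $Y_1,\ldots,Y_k$ be arbitrary $2$-element subsets of $[n]$. Then the number $S_{22}(m,n,k)$ of functions $f:[m]\to[n]$ such that $f(X_i)\neq Y_i$ for $i=1,2,\ldots,k$ equals $$S_{22}(m,n,k)=\sum_{i=0}^k(-2)^i\binom{k}{i}n^{m-2i}=n^{m-2k}(n^2-2)^k.$$
   Context: $[n]=\{1,\ldots,n\}$. *)

theory Defs
  imports Main "HOL-Library.FuncSet"
begin

definition S22 :: "nat \<Rightarrow> nat \<Rightarrow> nat \<Rightarrow> (nat \<Rightarrow> nat set) \<Rightarrow> (nat \<Rightarrow> nat set) \<Rightarrow> nat" where
  "S22 m n k X Y = card {f \<in> {1..m} \<rightarrow>\<^sub>E {1..n}. \<forall>i\<in>{1..k}. f ` X i \<noteq> Y i}"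

end

theory Submission imports Defs begin

text \<open>Since the blocks \<open>X\<^sub>i\<close> are disjoint, a function \<open>[m] \<rightarrow> [n]\<close> is the same as a
  family of independent restrictions to the blocks and to the rest of \<open>[m]\<close>. On a block,
  exactly two of the \<open>n\<^sup>2\<close> restrictions map \<open>X\<^sub>i\<close> onto \<open>Y\<^sub>i\<close> (the two bijections), so
  the count is \<open>n\<^sup>m\<^sup>-\<^sup>2\<^sup>k (n\<^sup>2 - 2)\<^sup>k\<close>; the alternating sum is its binomial expansion.\<close>

definition avoiding :: "'a set \<Rightarrow> 'b set \<Rightarrow> 'i set \<Rightarrow> ('i \<Rightarrow> 'a set) \<Rightarrow> ('i \<Rightarrow> 'b set) \<Rightarrow> ('a \<Rightarrow> 'b) set"
  where "avoiding A B I X Y = {f \<in> A \<rightarrow>\<^sub>E B. \<forall>i\<in>I. f ` X i \<noteq> Y i}"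

lemma card_PiE_image_eq_doubleton:
  assumes "card X = 2" "card Y = 2" "Y \<subseteq> B"
  shows "card {h \<in> X \<rightarrow>\<^sub>E B. h ` X = Y} = 2"
proof -
  obtain a b where X: "X = {a, b}" "a \<noteq> b" using assms(1) card_2_iff by metis
  obtain c d where Y: "Y = {c, d}" "c \<noteq> d" using assms(2) card_2_iff by metis
  define h1 where "h1 = (\<lambda>x. if x = a then c else if x = b then d else undefined)"
  define h2 where "h2 = (\<lambda>x. if x = a then d else if x = b then c else undefined)"
  have "{h \<in> X \<rightarrow>\<^sub>E B. h ` X = Y} = {h1, h2}"
  proof
    show "{h \<in> X \<rightarrow>\<^sub>E B. h ` X = Y} \<subseteq> {h1, h2}"
    proof
      fix h assume h: "h \<in> {h \<in> X \<rightarrow>\<^sub>E B. h ` X = Y}"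
      then have "{h a, h b} = {c, d}" and outside: "\<And>x. x \<notin> {a, b} \<Longrightarrow> h x = undefined"
        using X Y by (auto simp: PiE_def extensional_def)
      then have "(h a = c \<and> h b = d) \<or> (h a = d \<and> h b = c)"
        using Y(2) by (auto simp: doubleton_eq_iff)
      then show "h \<in> {h1, h2}"
        using outside X(2) by (auto simp: h1_def h2_def fun_eq_iff)
    qed
    show "{h1, h2} \<subseteq> {h \<in> X \<rightarrow>\<^sub>E B. h ` X = Y}"
      using X Y assms(3) by (auto simp: h1_def h2_def)
  qed
  moreover have "h1 \<noteq> h2" using Y(2) by (metis h1_def h2_def)
  ultimately show ?thesis by simp
qed

lemma card_PiE_image_neq_doubleton:
  assumes "card X = 2" "card Y = 2" "Y \<subseteq> B" "finite B"
  shows "card {h \<in> X \<rightarrow>\<^sub>E B. h ` X \<noteq> Y} = card B ^ 2 - 2"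
proof -
  have "finite X" using assms(1) card.infinite by fastforce
  have "{h \<in> X \<rightarrow>\<^sub>E B. h ` X \<noteq> Y} = (X \<rightarrow>\<^sub>E B) - {h \<in> X \<rightarrow>\<^sub>E B. h ` X = Y}" by auto
  then have "card {h \<in> X \<rightarrow>\<^sub>E B. h ` X \<noteq> Y} = card (X \<rightarrow>\<^sub>E B) - card {h \<in> X \<rightarrow>\<^sub>E B. h ` X = Y}"
    using \<open>finite X\<close> assms(4) by (simp add: card_Diff_subset finite_PiE)
  then show ?thesis
    using card_PiE_image_eq_doubleton[OF assms(1-3)] \<open>finite X\<close> assms(1)
    by (simp add: card_PiE)
qed

lemma bij_betw_merge_avoiding_insert:
  assumes "X j \<subseteq> A" "\<forall>i\<in>I. X i \<subseteq> A \<and> X i \<inter> X j = {}"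
  shows "bij_betw (\<lambda>(g, h) x. if x \<in> X j then h x else g x)
           (avoiding (A - X j) B I X Y \<times> avoiding (X j) B {j} X Y) (avoiding A B (insert j I) X Y)"
proof (rule bij_betw_byWitness[where f'="\<lambda>f. (restrict f (A - X j), restrict f (X j))"])
  let ?merge = "\<lambda>(g, h) x. if x \<in> X j then h x else g x"
  show "\<forall>p\<in>avoiding (A - X j) B I X Y \<times> avoiding (X j) B {j} X Y.
          (restrict (?merge p) (A - X j), restrict (?merge p) (X j)) = p"
    by (auto simp: avoiding_def fun_eq_iff PiE_def extensional_def)
  show "\<forall>f\<in>avoiding A B (insert j I) X Y. ?merge (restrict f (A - X j), restrict f (X j)) = f"
    by (auto simp: avoiding_def fun_eq_iff PiE_def extensional_def)
  show "?merge ` (avoiding (A - X j) B I X Y \<times> avoiding (X j) B {j} X Y) \<subseteq> avoiding A B (insert j I) X Y"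
  proof (rule image_subsetI)
    fix p assume "p \<in> avoiding (A - X j) B I X Y \<times> avoiding (X j) B {j} X Y"
    then obtain g h where p: "p = (g, h)"
      and g: "g \<in> avoiding (A - X j) B I X Y" and h: "h \<in> avoiding (X j) B {j} X Y" by blast
    have "\<And>i. i \<in> I \<Longrightarrow> ?merge (g, h) ` X i = g ` X i"
      using assms(2) by (force simp: image_def)
    moreover have "?merge (g, h) ` X j = h ` X j" by auto
    moreover have "?merge (g, h) \<in> A \<rightarrow>\<^sub>E B"
      using g h assms(1) by (auto simp: avoiding_def PiE_def extensional_def)
    ultimately show "?merge p \<in> avoiding A B (insert j I) X Y"
      using g h p by (auto simp: avoiding_def)
  qed
  show "(\<lambda>f. (restrict f (A - X j), restrict f (X j))) ` avoiding A B (insert j I) X Y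
          \<subseteq> avoiding (A - X j) B I X Y \<times> avoiding (X j) B {j} X Y"
  proof (rule image_subsetI)
    fix f assume f: "f \<in> avoiding A B (insert j I) X Y"
    have "\<And>i. i \<in> I \<Longrightarrow> restrict f (A - X j) ` X i = f ` X i"
      using assms(2) by (auto simp: image_def)
    then show "(restrict f (A - X j), restrict f (X j)) \<in> avoiding (A - X j) B I X Y \<times> avoiding (X j) B {j} X Y"
      using f assms(1) by (auto simp: avoiding_def)
  qed
qed

lemma card_avoiding:
  assumes "finite I" "finite A" "finite B"
    and "\<forall>i\<in>I. X i \<subseteq> A \<and> card (X i) = 2"
    and "\<forall>i\<in>I. \<forall>j\<in>I. i \<noteq> j \<longrightarrow> X i \<inter> X j = {}"
    and "\<forall>i\<in>I. Y i \<subseteq> B \<and> card (Y i) = 2"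
  shows "card (avoiding A B I X Y) = card B ^ (card A - 2 * card I) * (card B ^ 2 - 2) ^ card I"
  using assms
proof (induction I arbitrary: A rule: finite_induct)
  case empty
  then show ?case by (simp add: avoiding_def card_PiE)
next
  case (insert j I)
  have Xj: "X j \<subseteq> A" "card (X j) = 2" using insert.prems by auto
  have blocks: "\<forall>i\<in>I. X i \<subseteq> A \<and> X i \<inter> X j = {}" using insert.prems(3,4) insert.hyps(2) by (metis insertCI)
  have "card (avoiding (A - X j) B I X Y) * card (avoiding (X j) B {j} X Y)
          = card (avoiding A B (insert j I) X Y)"
    using bij_betw_same_card[OF bij_betw_merge_avoiding_insert[OF Xj(1) blocks]]
    by (simp add: card_cartesian_product)
  moreover have "card (avoiding (A - X j) B I X Y)
                   = card B ^ (card (A - X j) - 2 * card I) * (card B ^ 2 - 2) ^ card I"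
    using insert.IH[of "A - X j"] insert.prems blocks by auto
  moreover have "card (avoiding (X j) B {j} X Y) = card B ^ 2 - 2"
    using card_PiE_image_neq_doubleton[of "X j" "Y j" B] Xj insert.prems
    by (simp add: avoiding_def)
  moreover have "card (A - X j) = card A - 2"
    using Xj finite_subset[OF Xj(1) \<open>finite A\<close>] by (simp add: card_Diff_subset)
  ultimately show ?case using insert.hyps by (simp add: algebra_simps)
qed

lemma card_disjoint_family_le:
  assumes "finite A" "\<forall>i\<in>I. X i \<subseteq> A \<and> card (X i) = c"
    and "\<forall>i\<in>I. \<forall>j\<in>I. i \<noteq> j \<longrightarrow> X i \<inter> X j = {}" "finite I"
  shows "c * card I \<le> card A"
proof -
  have "c * card I = card (\<Union>i\<in>I. X i)"
    using assms by (subst card_UN_disjoint) (auto intro: finite_subset)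
  also have "\<dots> \<le> card A" using assms(1,2) by (intro card_mono) auto
  finally show ?thesis .
qed

lemma power_diff_mult_binomial:
  fixes x c :: "'a :: comm_ring_1"
  assumes "2 * k \<le> m"
  shows "x ^ (m - 2 * k) * (x ^ 2 - c) ^ k = (\<Sum>i=0..k. (- c) ^ i * of_nat (k choose i) * x ^ (m - 2 * i))"
proof -
  have "x ^ (m - 2 * k) * (x ^ 2 - c) ^ k
          = x ^ (m - 2 * k) * (\<Sum>i=0..k. of_nat (k choose i) * (- c) ^ i * (x ^ 2) ^ (k - i))"
    using binomial_ring[of "- c" "x ^ 2" k] by (simp add: atLeast0AtMost)
  also have "\<dots> = (\<Sum>i=0..k. (- c) ^ i * of_nat (k choose i) * x ^ (m - 2 * i))"
    unfolding sum_distrib_left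
  proof (rule sum.cong)
    fix i assume "i \<in> {0..k}"
    then have "m - 2 * i = (m - 2 * k) + 2 * (k - i)" using assms by auto
    then show "x ^ (m - 2 * k) * (of_nat (k choose i) * (- c) ^ i * (x ^ 2) ^ (k - i))
                 = (- c) ^ i * of_nat (k choose i) * x ^ (m - 2 * i)"
      by (simp add: power_add power_mult)
  qed simp
  finally show ?thesis .
qed

theorem corollary5:
  fixes m n k :: nat and X Y :: "nat \<Rightarrow> nat set"
  assumes "m > 0" and "n > 0" and "k > 0"
    and "\<And>i. i \<in> {1..k} \<Longrightarrow> X i \<subseteq> {1..m} \<and> card (X i) = 2"
    and "\<And>i j. i \<in> {1..k} \<Longrightarrow> j \<in> {1..k} \<Longrightarrow> i \<noteq> j \<Longrightarrow> X i \<inter> X j = {}"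
    and "\<And>i. i \<in> {1..k} \<Longrightarrow> Y i \<subseteq> {1..n} \<and> card (Y i) = 2"
  shows "int (S22 m n k X Y) = (\<Sum>i=0..k. (-2)^i * int (k choose i) * int n ^ (m - 2*i))
       \<and> int (S22 m n k X Y) = int n ^ (m - 2*k) * (int n ^ 2 - 2) ^ k"
proof -
  have "S22 m n k X Y = n ^ (m - 2 * k) * (n ^ 2 - 2) ^ k"
    using card_avoiding[of "{1..k}" "{1..m}" "{1..n}" X Y] assms
    by (simp add: S22_def avoiding_def)
  moreover have "2 \<le> n"
    using card_mono[of "{1..n}" "Y 1"] assms(3,6) by force
  then have "2 \<le> n ^ 2" using self_le_power[of n 2] by simp
  ultimately have closed_form: "int (S22 m n k X Y) = int n ^ (m - 2 * k) * (int n ^ 2 - 2) ^ k"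
    by (simp add: of_nat_diff)
  have "2 * k \<le> m"
    using card_disjoint_family_le[of "{1..m}" "{1..k}" X 2] assms(4,5) by simp
  then show ?thesis
    using closed_form power_diff_mult_binomial[of k m "int n" 2] by simp
qed

end
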